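(* Let $(V,E,c,p)$ be a PCSTP instance and $v_i,v_j\in V$. If $$p(v_i) > d^-_{pc}(v_i,v_j),$$ then every optimal solution that contains $v_j$ also contains $v_i$.
   Context: A PCSTP instance $(V,E,c,p)$: finite undirected connected graph $G=(V,E)$, $c:E\to\mathbb{Q}_{>0}$, $p:V\to\mathbb{Q}_{\ge0}$. For a tree $S\subseteq G$ (connected acyclic subgraph with at least one vertex), $C(S):=\sum_{e\in E(S)}c(e)+\sum_{v\in V\setminus V(S)}p(v)$; an optimal solution is a tree minimizing $C$. $T_p:=\{v\in V:p(v)>0\}$. A prize-constrained $(v_i,v_j)$-walk is a finite walk $W=(v_{i_1},e_{i_1},\dots,e_{i_{r-1}},v_{i_r})$ with $v_{i_1}=v_i$, $v_{i_r}=v_j$ in which no vertex of $T_p\cup\{v_i,v_j\}$ occurs more than once. $V(W),E(W)$ are its vertex and edge sets; for $1\le k\le r$, $W[1,k]$ is the initial subwalk $(v_{i_1},\dots,v_{i_k})$. For a walk $W$ from $a$ to $b$, $c_{pc}(W):=\sum_{e\in E(W)}c(e)-\sum_{v\in V(W)\setminus\{a,b\}}p(v)$. The left-rooted prize-constrained length is $l^-_{pc}(W):=\max\{c_{pc}(W[1,k]): 1\le k\le r,\ v_{i_k}\in T_p\cup\{v_j\}\}$, and the left-rooted prize-constrained distance is $d^-_{pc}(v_i,v_j):=\inf\{l^-_{pc}(W): W\text{ a prize-constrained }(v_i,v_j)\text{-walk}\}$ (not symmetric in general). *)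

theory Defs
  imports Complex_Main
begin

definition is_walk :: "'a set set \<Rightarrow> 'a list \<Rightarrow> bool" where
  "is_walk E ws \<longleftrightarrow> ws \<noteq> [] \<and> (\<forall>k. Suc k < length ws \<longrightarrow> {ws ! k, ws ! Suc k} \<in> E)"

definition walk_edges :: "'a list \<Rightarrow> 'a set set" where
  "walk_edges ws = {{ws ! k, ws ! Suc k} | k. Suc k < length ws}"

definition connected_graph :: "'a set \<Rightarrow> 'a set set \<Rightarrow> bool" where
  "connected_graph V E \<longleftrightarrow>
     (\<forall>u\<in>V. \<forall>v\<in>V. \<exists>ws. is_walk E ws \<and> set ws \<subseteq> V \<and> hd ws = u \<and> last ws = v)"

definition has_cycle :: "'a set set \<Rightarrow> bool" where
  "has_cycle E \<longleftrightarrow> (\<exists>ws. length ws \<ge> 3 \<and> distinct ws \<and> is_walk E ws \<and> {last ws, hd ws} \<in> E)"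

definition is_tree :: "'a set \<Rightarrow> 'a set set \<Rightarrow> 'a set \<Rightarrow> 'a set set \<Rightarrow> bool" where
  "is_tree V E VS ES \<longleftrightarrow> VS \<noteq> {} \<and> VS \<subseteq> V \<and> ES \<subseteq> E \<and> (\<forall>e\<in>ES. e \<subseteq> VS)
     \<and> connected_graph VS ES \<and> \<not> has_cycle ES"

definition pcstp :: "'a set \<Rightarrow> 'a set set \<Rightarrow> ('a set \<Rightarrow> real) \<Rightarrow> ('a \<Rightarrow> real) \<Rightarrow> bool" where
  "pcstp V E c p \<longleftrightarrow> finite V \<and> V \<noteq> {}
     \<and> (\<forall>e\<in>E. \<exists>u v. e = {u, v} \<and> u \<noteq> v \<and> u \<in> V \<and> v \<in> V)
     \<and> connected_graph V E
     \<and> (\<forall>e\<in>E. c e \<in> \<rat> \<and> c e > 0)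
     \<and> (\<forall>v\<in>V. p v \<in> \<rat> \<and> p v \<ge> 0)"

definition Tp :: "'a set \<Rightarrow> ('a \<Rightarrow> real) \<Rightarrow> 'a set" where
  "Tp V p = {v \<in> V. p v > 0}"

definition sol_cost :: "'a set \<Rightarrow> ('a set \<Rightarrow> real) \<Rightarrow> ('a \<Rightarrow> real) \<Rightarrow> 'a set \<Rightarrow> 'a set set \<Rightarrow> real" where
  "sol_cost V c p VS ES = (\<Sum>e\<in>ES. c e) + (\<Sum>v\<in>V - VS. p v)"

definition optimal_solution ::
  "'a set \<Rightarrow> 'a set set \<Rightarrow> ('a set \<Rightarrow> real) \<Rightarrow> ('a \<Rightarrow> real) \<Rightarrow> 'a set \<Rightarrow> 'a set set \<Rightarrow> bool" where
  "optimal_solution V E c p VS ES \<longleftrightarrow> is_tree V E VS ES \<and>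
     (\<forall>VS' ES'. is_tree V E VS' ES' \<longrightarrow> sol_cost V c p VS ES \<le> sol_cost V c p VS' ES')"

definition pc_walk :: "'a set \<Rightarrow> 'a set set \<Rightarrow> ('a \<Rightarrow> real) \<Rightarrow> 'a \<Rightarrow> 'a \<Rightarrow> 'a list \<Rightarrow> bool" where
  "pc_walk V E p vi vj ws \<longleftrightarrow> is_walk E ws \<and> set ws \<subseteq> V \<and> hd ws = vi \<and> last ws = vj
     \<and> (\<forall>v \<in> Tp V p \<union> {vi, vj}. count_list ws v \<le> 1)"

definition c_pc :: "('a set \<Rightarrow> real) \<Rightarrow> ('a \<Rightarrow> real) \<Rightarrow> 'a list \<Rightarrow> real" where
  "c_pc c p ws = (\<Sum>e\<in>walk_edges ws. c e) - (\<Sum>v\<in>set ws - {hd ws, last ws}. p v)"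

text \<open>Left-rooted prize-constrained length; W[1,k] = take k ws, v_{i_k} = ws ! (k-1).\<close>
definition l_minus :: "'a set \<Rightarrow> ('a set \<Rightarrow> real) \<Rightarrow> ('a \<Rightarrow> real) \<Rightarrow> 'a \<Rightarrow> 'a list \<Rightarrow> real" where
  "l_minus V c p vj ws =
     Max {c_pc c p (take k ws) | k. 1 \<le> k \<and> k \<le> length ws \<and> ws ! (k - 1) \<in> Tp V p \<union> {vj}}"

definition d_minus ::
  "'a set \<Rightarrow> 'a set set \<Rightarrow> ('a set \<Rightarrow> real) \<Rightarrow> ('a \<Rightarrow> real) \<Rightarrow> 'a \<Rightarrow> 'a \<Rightarrow> real" where
  "d_minus V E c p vi vj = Inf {l_minus V c p vj ws | ws. pc_walk V E p vi vj ws}"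

end

theory Submission
  imports Defs
begin

text \<open>
  Suppose an optimal tree \<open>S\<close> contains \<open>v\<^sub>j\<close> but not \<open>v\<^sub>i\<close>, and take a prize-constrained
  walk \<open>W\<close> from \<open>v\<^sub>i\<close> to \<open>v\<^sub>j\<close> with \<open>l\<^sup>-\<^sub>p\<^sub>c(W) < p(v\<^sub>i)\<close>. Cut \<open>W\<close> at the first vertex of
  \<open>T\<^sub>p \<union> {v\<^sub>j}\<close> occurring at or after the first visit of \<open>W\<close> to \<open>S\<close>. Every vertex of this
  prefix that lies in \<open>S\<close>, except possibly its end, has prize zero. Adding the prefix to \<open>S\<close>
  and passing to a spanning tree therefore pays at most the edges of the prefix and collects
  \<open>p(v\<^sub>i)\<close> plus the prizes of all interior vertices, so the cost drops by at least
  \<open>p(v\<^sub>i) - c\<^sub>p\<^sub>c(prefix) \<ge> p(v\<^sub>i) - l\<^sup>-\<^sub>p\<^sub>c(W) > 0\<close>, contradicting optimality.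
\<close>

lemma is_walk_Nil [simp]: "\<not> is_walk E []"
  by (simp add: is_walk_def)

lemma is_walk_nonempty: "is_walk E ws \<Longrightarrow> ws \<noteq> []"
  by (simp add: is_walk_def)

lemma is_walk_single [simp]: "is_walk E [x]"
  by (simp add: is_walk_def)

lemma is_walk_Cons_Cons [simp]: "is_walk E (x # y # zs) \<longleftrightarrow> {x, y} \<in> E \<and> is_walk E (y # zs)"
  unfolding is_walk_def by (auto simp: less_Suc_eq_0_disj)

lemma is_walk_append:
  "is_walk E xs \<Longrightarrow> is_walk E ys \<Longrightarrow> {last xs, hd ys} \<in> E \<Longrightarrow> is_walk E (xs @ ys)"
proof (induction xs rule: induct_list012)
  case (2 x)
  then show ?case by (cases ys) auto
qed auto

lemma is_walk_join:
  assumes "is_walk E xs" "is_walk E ys" "last xs = hd ys"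
  shows "is_walk E (xs @ tl ys)"
proof -
  obtain y ys' where "ys = y # ys'"
    using assms(2) by (cases ys) auto
  with assms show ?thesis
    by (cases ys') (auto intro: is_walk_append)
qed

lemma is_walk_rev: "is_walk E ws \<Longrightarrow> is_walk E (rev ws)"
proof (induction ws rule: induct_list012)
  case (3 x y zs)
  then have "is_walk E (rev (y # zs))" "{last (rev (y # zs)), hd [x]} \<in> E"
    by (auto simp: insert_commute)
  then have "is_walk E (rev (y # zs) @ [x])"
    by (intro is_walk_append) auto
  then show ?case by simp
qed auto

lemma is_walk_mono: "is_walk E ws \<Longrightarrow> E \<subseteq> F \<Longrightarrow> is_walk F ws"
  unfolding is_walk_def by blast

lemma is_walk_drop: "is_walk E ws \<Longrightarrow> n < length ws \<Longrightarrow> is_walk E (drop n ws)"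
  unfolding is_walk_def by auto

lemma is_walk_take: "is_walk E ws \<Longrightarrow> 0 < n \<Longrightarrow> is_walk E (take n ws)"
  unfolding is_walk_def by auto

lemma set_walk_subset: "is_walk F ws \<Longrightarrow> \<forall>e\<in>F. e \<subseteq> A \<Longrightarrow> hd ws \<in> A \<Longrightarrow> set ws \<subseteq> A"
  by (induction ws rule: induct_list012) fastforce+

lemma walk_edges_conv_image: "walk_edges ws = (\<lambda>k. {ws ! k, ws ! Suc k}) ` {k. Suc k < length ws}"
  unfolding walk_edges_def by blast

lemma finite_walk_edges [simp]: "finite (walk_edges ws)"
  unfolding walk_edges_conv_image by (rule finite_imageI) (auto intro: finite_subset[of _ "{..<length ws}"])

lemma walk_edges_subset: "is_walk E ws \<Longrightarrow> walk_edges ws \<subseteq> E"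
  unfolding is_walk_def walk_edges_def by blast

lemma walk_edges_subset_Pow: "walk_edges ws \<subseteq> Pow (set ws)"
  unfolding walk_edges_def by auto

lemma is_walk_walk_edges: "ws \<noteq> [] \<Longrightarrow> is_walk (walk_edges ws) ws"
  unfolding is_walk_def walk_edges_def by blast

lemma walk_shortcut_distinct:
  assumes "is_walk E ws"
  obtains ws' where "is_walk E ws'" "distinct ws'" "hd ws' = hd ws" "last ws' = last ws" "set ws' \<subseteq> set ws"
  using assms
proof (induction ws arbitrary: thesis rule: induct_list012)
  case (3 x y zs)
  then obtain ys where ys: "is_walk E ys" "distinct ys" "hd ys = y" "last ys = last (y # zs)"
      "set ys \<subseteq> set (y # zs)"
    by auto
  show ?case
  proof (cases "x \<in> set ys")
    case True
    then obtain n where n: "n < length ys" "ys ! n = x"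
      by (auto simp: in_set_conv_nth)
    then show ?thesis
      using ys by (intro "3.prems"(1)[of "drop n ys"])
        (auto simp: is_walk_drop hd_drop_conv_nth last_drop dest: in_set_dropD)
  next
    case False
    from ys(1,3) obtain r where "ys = y # r"
      by (cases ys) (auto dest: is_walk_nonempty)
    with False ys "3.prems" show ?thesis
      by (intro "3.prems"(1)[of "x # ys"]) auto
  qed
next
  case (2 x)
  from "2.prems"(1)[of "[x]"] show ?case by simp
qed simp

definition reachable :: "'a set set \<Rightarrow> 'a \<Rightarrow> 'a \<Rightarrow> bool" where
  "reachable F u v \<longleftrightarrow> (\<exists>ws. is_walk F ws \<and> hd ws = u \<and> last ws = v)"

lemma reachable_refl: "reachable F u u"
  unfolding reachable_def by (rule exI[of _ "[u]"]) simp

lemma reachable_edge: "{u, v} \<in> F \<Longrightarrow> reachable F u v"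
  unfolding reachable_def by (rule exI[of _ "[u, v]"]) simp

lemma reachable_sym: "reachable F u v \<Longrightarrow> reachable F v u"
  unfolding reachable_def by (metis is_walk_rev is_walk_Nil hd_rev last_rev)

lemma reachable_trans:
  assumes "reachable F u v" "reachable F v x"
  shows "reachable F u x"
proof -
  obtain xs ys where walks: "is_walk F xs" "hd xs = u" "last xs = v" "is_walk F ys" "hd ys = v" "last ys = x"
    using assms unfolding reachable_def by blast
  then have "is_walk F (xs @ tl ys)"
    by (intro is_walk_join) auto
  moreover have "hd (xs @ tl ys) = u" "last (xs @ tl ys) = x"
    using walks is_walk_nonempty[of F xs] is_walk_nonempty[of F ys]
    by (auto simp: last_append neq_Nil_conv)
  ultimately show ?thesis
    unfolding reachable_def by blast
qed

lemma reachable_mono: "reachable E u v \<Longrightarrow> E \<subseteq> F \<Longrightarrow> reachable F u v"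
  unfolding reachable_def by (metis is_walk_mono)

lemma reachable_last: "is_walk F ws \<Longrightarrow> u \<in> set ws \<Longrightarrow> reachable F u (last ws)"
  unfolding reachable_def in_set_conv_nth
  by (metis is_walk_drop hd_drop_conv_nth last_drop)

lemma reachable_if_edges_reachable:
  assumes "\<And>x y. {x, y} \<in> F \<Longrightarrow> reachable F' x y" and "reachable F u v"
  shows "reachable F' u v"
proof -
  have "is_walk F ws \<Longrightarrow> reachable F' (hd ws) (last ws)" for ws
    by (induction ws rule: induct_list012) (auto intro: assms(1) reachable_refl reachable_trans)
  then show ?thesis
    using assms(2) unfolding reachable_def by blast
qed

lemma connected_graph_iff_reachable:
  assumes "\<forall>e\<in>F. e \<subseteq> A"
  shows "connected_graph A F \<longleftrightarrow> (\<forall>u\<in>A. \<forall>v\<in>A. reachable F u v)"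
proof
  show "connected_graph A F \<Longrightarrow> \<forall>u\<in>A. \<forall>v\<in>A. reachable F u v"
    unfolding connected_graph_def reachable_def by fast
next
  assume reach: "\<forall>u\<in>A. \<forall>v\<in>A. reachable F u v"
  show "connected_graph A F"
    unfolding connected_graph_def
  proof (intro ballI)
    fix u v assume "u \<in> A" "v \<in> A"
    with reach obtain ws where ws: "is_walk F ws" "hd ws = u" "last ws = v"
      unfolding reachable_def by blast
    moreover from this have "set ws \<subseteq> A"
      using assms \<open>u \<in> A\<close> by (intro set_walk_subset) auto
    ultimately show "\<exists>ws. is_walk F ws \<and> set ws \<subseteq> A \<and> hd ws = u \<and> last ws = v"
      by blast
  qed
qed

lemma has_cycle_redundant_edge:
  assumes "has_cycle F"
  obtains e where "e \<in> F" "\<And>u v. reachable F u v \<Longrightarrow> reachable (F - {e}) u v"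
proof -
  obtain ws where ws: "length ws \<ge> 3" "distinct ws" "is_walk F ws" "{last ws, hd ws} \<in> F"
    using assms unfolding has_cycle_def by blast
  define e where "e = {last ws, hd ws}"
  have "{ws ! k, ws ! Suc k} \<noteq> e" if k: "Suc k < length ws" for k
  proof
    assume edge: "{ws ! k, ws ! Suc k} = e"
    have index_eq: "ws ! i = ws ! j \<longleftrightarrow> i = j" if "i < length ws" "j < length ws" for i j
      using nth_eq_iff_index_eq[OF ws(2) that] .
    have idx: "0 < length ws" "length ws - 1 < length ws" "k < length ws"
      using ws(1) k by auto
    then have "ws ! 0 \<in> {ws ! k, ws ! Suc k}" "ws ! (length ws - 1) \<in> {ws ! k, ws ! Suc k}"
      using edge by (simp_all add: e_def last_conv_nth hd_conv_nth)
    then have "k = 0" "length ws - 1 \<le> Suc k"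
      unfolding insert_iff empty_iff
      unfolding index_eq[OF idx(1) idx(3)] index_eq[OF idx(1) k] index_eq[OF idx(2) idx(3)]
        index_eq[OF idx(2) k]
      by auto
    with ws(1) show False
      by simp
  qed
  with ws(3) have "is_walk (F - {e}) ws"
    unfolding is_walk_def by blast
  then have along: "reachable (F - {e}) (hd ws) (last ws)"
    unfolding reachable_def by blast
  have "reachable (F - {e}) x y" if "{x, y} \<in> F" for x y
  proof (cases "{x, y} = e")
    case True
    then show ?thesis
      using along reachable_sym[OF along] by (auto simp: e_def doubleton_eq_iff)
  next
    case False
    with that show ?thesis
      by (intro reachable_edge) blast
  qed
  with ws(4) show ?thesis
    by (intro that[of e]) (auto simp: e_def intro: reachable_if_edges_reachable)
qed

lemma acyclic_subgraph_same_reachability: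
  "finite F \<Longrightarrow> \<exists>F'\<subseteq>F. (\<forall>u v. reachable F u v \<longrightarrow> reachable F' u v) \<and> \<not> has_cycle F'"
proof (induction "card F" arbitrary: F rule: less_induct)
  case less
  show ?case
  proof (cases "has_cycle F")
    case True
    obtain e where e: "e \<in> F" "\<And>u v. reachable F u v \<Longrightarrow> reachable (F - {e}) u v"
      using has_cycle_redundant_edge[OF True] by blast
    with less.prems have "card (F - {e}) < card F"
      by (intro card_Diff1_less)
    from less.hyps[OF this finite_Diff[OF less.prems]]
    obtain F' where F': "F' \<subseteq> F - {e}" "\<forall>u v. reachable (F - {e}) u v \<longrightarrow> reachable F' u v"
        "\<not> has_cycle F'"
      by blast
    have "reachable F' u v" if "reachable F u v" for u v
      using F'(2) e(2)[OF that] by simp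
    with F'(1,3) show ?thesis
      by (intro exI[of _ F']) auto
  next
    case False
    then show ?thesis
      by (intro exI[of _ F]) simp
  qed
qed

lemma count_list_le_1_if_distinct: "distinct xs \<Longrightarrow> count_list xs x \<le> 1"
  by (induction xs) auto

lemma first_marked_after_hitting:
  assumes "xs \<noteq> []" "last xs \<in> A" "last xs \<in> T"
  obtains k where "0 < k" "k \<le> length xs" "xs ! (k - 1) \<in> T" "set (take k xs) \<inter> A \<noteq> {}"
    "set (take k xs) \<inter> A \<inter> T \<subseteq> {xs ! (k - 1)}"
proof -
  define Q where "Q i \<longleftrightarrow> i < length xs \<and> xs ! i \<in> T \<and> (\<exists>j\<le>i. xs ! j \<in> A)" for i
  define m where "m = (LEAST i. Q i)"
  have "Q (length xs - 1)"
    using assms by (auto simp: Q_def last_conv_nth)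
  then have m: "Q m" and m_least: "\<And>i. Q i \<Longrightarrow> m \<le> i"
    unfolding m_def by (auto intro: LeastI Least_le)
  have "set (take (Suc m) xs) \<inter> A \<inter> T \<subseteq> {xs ! m}"
  proof
    fix v assume "v \<in> set (take (Suc m) xs) \<inter> A \<inter> T"
    then obtain j where "j \<le> m" "xs ! j = v" "v \<in> A" "v \<in> T"
      using m by (auto simp: Q_def in_set_conv_nth less_Suc_eq_le)
    moreover from this have "Q j"
      using m by (auto simp: Q_def)
    ultimately show "v \<in> {xs ! m}"
      using m_least[of j] by auto
  qed
  moreover have "set (take (Suc m) xs) \<inter> A \<noteq> {}"
  proof -
    obtain j where "j \<le> m" "xs ! j \<in> A"
      using m by (auto simp: Q_def)
    moreover from this have "take (Suc m) xs ! j \<in> set (take (Suc m) xs)"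
      using m by (intro nth_mem) (simp add: Q_def)
    ultimately show ?thesis
      by auto
  qed
  ultimately show ?thesis
    using m by (intro that[of "Suc m"]) (auto simp: Q_def)
qed

lemma pcstp_edge_subset:
  assumes "pcstp V E c p" "e \<in> E"
  shows "e \<subseteq> V"
proof -
  obtain u v where "e = {u, v}" "u \<in> V" "v \<in> V"
    using assms unfolding pcstp_def by blast
  then show ?thesis
    by simp
qed

lemma pcstp_finite_edges:
  assumes "pcstp V E c p"
  shows "finite E"
proof (rule finite_subset)
  show "E \<subseteq> Pow V"
    using pcstp_edge_subset[OF assms] by blast
  show "finite (Pow V)"
    using assms by (simp add: pcstp_def)
qed

lemma pc_walk_exists:
  assumes "connected_graph V E" "vi \<in> V" "vj \<in> V"
  obtains ws where "pc_walk V E p vi vj ws"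
proof -
  obtain ws where ws: "is_walk E ws" "set ws \<subseteq> V" "hd ws = vi" "last ws = vj"
    using assms unfolding connected_graph_def by blast
  then obtain ws' where "is_walk E ws'" "distinct ws'" "hd ws' = vi" "last ws' = vj" "set ws' \<subseteq> set ws"
    by (metis walk_shortcut_distinct)
  moreover from this have "\<forall>v. count_list ws' v \<le> 1"
    using count_list_le_1_if_distinct[of ws'] by blast
  ultimately show ?thesis
    using ws(2) by (intro that[of ws']) (auto simp: pc_walk_def)
qed

lemma c_pc_take_le_l_minus:
  assumes "0 < k" "k \<le> length ws" "ws ! (k - 1) \<in> Tp V p \<union> {vj}"
  shows "c_pc c p (take k ws) \<le> l_minus V c p vj ws"
proof -
  have "finite {c_pc c p (take k ws) | k. 1 \<le> k \<and> k \<le> length ws \<and> ws ! (k - 1) \<in> Tp V p \<union> {vj}}"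
    by (rule finite_subset[of _ "(\<lambda>k. c_pc c p (take k ws)) ` {..length ws}"]) auto
  with assms show ?thesis
    unfolding l_minus_def by (intro Max_ge) auto
qed

lemma c_pc_lower_bound:
  assumes "finite V" "set ws \<subseteq> V" "\<forall>v\<in>V. 0 \<le> p v" "\<forall>e\<in>walk_edges ws. 0 \<le> c e"
  shows "- (\<Sum>v\<in>V. p v) \<le> c_pc c p ws"
proof -
  have "(\<Sum>v\<in>set ws - {hd ws, last ws}. p v) \<le> (\<Sum>v\<in>V. p v)"
    using assms(1-3) by (intro sum_mono2) auto
  moreover have "0 \<le> (\<Sum>e\<in>walk_edges ws. c e)"
    using assms(4) by (simp add: sum_nonneg)
  ultimately show ?thesis
    unfolding c_pc_def by linarith
qed

lemma pc_walk_below_d_minus: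
  assumes "pcstp V E c p" "vi \<in> V" "vj \<in> V" "d_minus V E c p vi vj < x"
  obtains ws where "pc_walk V E p vi vj ws" "l_minus V c p vj ws < x"
proof -
  define L where "L = {l_minus V c p vj ws | ws. pc_walk V E p vi vj ws}"
  \<comment> \<open>\<open>Inf L\<close> says nothing unless \<open>L\<close> is nonempty and bounded below.\<close>
  have "connected_graph V E"
    using assms(1) by (simp add: pcstp_def)
  then obtain ws where "pc_walk V E p vi vj ws"
    using assms(2,3) by (rule pc_walk_exists)
  then have "L \<noteq> {}"
    unfolding L_def by blast
  moreover have "bdd_below L"
  proof
    fix l assume "l \<in> L"
    then obtain ws where ws: "pc_walk V E p vi vj ws" and l: "l = l_minus V c p vj ws"
      unfolding L_def by blast
    then have walk: "is_walk E ws" "set ws \<subseteq> V" "last ws = vj"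
      unfolding pc_walk_def by auto
    then have "ws ! (length ws - 1) = vj"
      by (simp add: last_conv_nth is_walk_nonempty)
    then have "c_pc c p (take (length ws) ws) \<le> l"
      unfolding l using walk(1) by (intro c_pc_take_le_l_minus) (auto dest: is_walk_nonempty)
    moreover have "- (\<Sum>v\<in>V. p v) \<le> c_pc c p ws"
      using assms(1) walk walk_edges_subset[OF walk(1)]
      by (intro c_pc_lower_bound) (auto simp: pcstp_def less_imp_le)
    ultimately show "- (\<Sum>v\<in>V. p v) \<le> l"
      by simp
  qed
  moreover have "Inf L < x"
    using assms(4) unfolding d_minus_def L_def .
  ultimately obtain l where "l \<in> L" "l < x"
    by (auto simp: cInf_less_iff)
  then show ?thesis
    unfolding L_def using that by blast
qed

lemma tree_extend_by_walk:
  assumes tree: "is_tree V E VS ES" and "finite ES"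
    and P: "is_walk E P" "set P \<subseteq> V" "set P \<inter> VS \<noteq> {}"
  obtains F where "is_tree V E (VS \<union> set P) F" "F \<subseteq> ES \<union> walk_edges P"
proof -
  define A where "A = VS \<union> set P"
  define G where "G = ES \<union> walk_edges P"
  have ES: "VS \<subseteq> V" "ES \<subseteq> E" "\<forall>e\<in>ES. e \<subseteq> VS" "\<forall>u\<in>VS. \<forall>v\<in>VS. reachable ES u v"
    using tree by (auto simp: is_tree_def connected_graph_iff_reachable)
  have G_edges: "\<forall>e\<in>G. e \<subseteq> A"
    using ES(3) walk_edges_subset_Pow[of P] unfolding A_def G_def by blast
  obtain x where x: "x \<in> set P" "x \<in> VS"
    using P(3) by blast
  have "reachable G u x" if "u \<in> A" for u
  proof (cases "u \<in> VS")
    case True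
    then show ?thesis
      using ES(4) x(2) by (auto simp: G_def intro: reachable_mono)
  next
    case False
    then have "u \<in> set P"
      using that unfolding A_def by blast
    moreover have "is_walk (walk_edges P) P"
      using P(1) by (simp add: is_walk_walk_edges is_walk_nonempty)
    ultimately have "reachable (walk_edges P) u x"
      using x(1) by (meson reachable_last reachable_sym reachable_trans)
    then show ?thesis
      unfolding G_def by (rule reachable_mono) blast
  qed
  then have G_connected: "\<forall>u\<in>A. \<forall>v\<in>A. reachable G u v"
    by (meson reachable_sym reachable_trans)
  have "finite G"
    using \<open>finite ES\<close> unfolding G_def by simp
  then obtain F where F: "F \<subseteq> G" "\<forall>u v. reachable G u v \<longrightarrow> reachable F u v" "\<not> has_cycle F"
    by (meson acyclic_subgraph_same_reachability)
  have F_edges: "\<forall>e\<in>F. e \<subseteq> A"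
    using F(1) G_edges by blast
  have "connected_graph A F"
    using G_connected F(2) by (simp add: connected_graph_iff_reachable[OF F_edges])
  moreover have "F \<subseteq> E"
    using F(1) ES(2) walk_edges_subset[OF P(1)] unfolding G_def by blast
  moreover have "A \<noteq> {}" "A \<subseteq> V"
    using ES(1) P(2,3) unfolding A_def by auto
  ultimately have "is_tree V E A F"
    using F(3) F_edges unfolding is_tree_def by blast
  then show ?thesis
    using F(1) unfolding A_def G_def by (rule that)
qed

lemma sol_cost_extend_by_walk:
  assumes "finite V" "\<forall>v\<in>V. 0 \<le> p v" "finite ES" "\<forall>e\<in>ES \<union> walk_edges P. 0 \<le> c e"
    and "F \<subseteq> ES \<union> walk_edges P" "P \<noteq> []" "set P \<subseteq> V" "hd P \<notin> VS"
    and free: "\<forall>v\<in>set P \<inter> VS - {last P}. p v = 0"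
  shows "sol_cost V c p (VS \<union> set P) F \<le> sol_cost V c p VS ES + c_pc c p P - p (hd P)"
proof -
  have "sum c F \<le> sum c (ES \<union> walk_edges P)"
    using assms(3-5) by (intro sum_mono2) auto
  also have "\<dots> \<le> sum c ES + sum c (walk_edges P)"
    using assms(3,4) sum_Un[of ES "walk_edges P" c] sum_nonneg[of "ES \<inter> walk_edges P" c] by simp
  finally have edges: "sum c F \<le> sum c ES + sum c (walk_edges P)" .
  have "sum p (V - VS) = sum p (V - (VS \<union> set P)) + sum p (set P - VS)"
    using assms(1,7) by (subst sum.union_disjoint[symmetric]) (auto intro: sum.cong)
  moreover have "sum p (set P - VS) = p (hd P) + sum p (set P - VS - {hd P})"
    using assms(6,8) by (intro sum.remove) auto
  moreover have "sum p (set P - {hd P, last P}) = sum p (set P - VS - {hd P, last P})"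
    using free by (intro sum.mono_neutral_right) auto
  moreover have "\<dots> \<le> sum p (set P - VS - {hd P})"
    using assms(2,7) by (intro sum_mono2) auto
  ultimately show ?thesis
    using edges unfolding sol_cost_def c_pc_def by linarith
qed

lemma optimal_solution_prize_le_c_pc:
  assumes pcstp: "pcstp V E c p" and opt: "optimal_solution V E c p VS ES"
    and P: "is_walk E P" "set P \<subseteq> V" "hd P \<notin> VS" "set P \<inter> VS \<noteq> {}"
    and free: "\<forall>v\<in>set P \<inter> VS - {last P}. p v = 0"
  shows "p (hd P) \<le> c_pc c p P"
proof -
  have tree: "is_tree V E VS ES"
    using opt unfolding optimal_solution_def by blast
  have "finite E" "\<forall>e\<in>E. 0 \<le> c e"
    using pcstp pcstp_finite_edges by (auto simp: pcstp_def less_imp_le)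
  moreover from this have "finite ES"
    using tree unfolding is_tree_def by (blast intro: finite_subset)
  ultimately obtain F where F: "is_tree V E (VS \<union> set P) F" "F \<subseteq> ES \<union> walk_edges P"
    using tree_extend_by_walk[OF tree _ P(1,2,4)] by blast
  have "sol_cost V c p (VS \<union> set P) F \<le> sol_cost V c p VS ES + c_pc c p P - p (hd P)"
    using pcstp tree P free F(2) walk_edges_subset[OF P(1)] \<open>finite ES\<close> \<open>\<forall>e\<in>E. 0 \<le> c e\<close>
    by (intro sol_cost_extend_by_walk) (auto simp: pcstp_def is_tree_def is_walk_nonempty)
  moreover have "sol_cost V c p VS ES \<le> sol_cost V c p (VS \<union> set P) F"
    using opt F(1) unfolding optimal_solution_def by blast
  ultimately show ?thesis
    by linarith
qed

theorem proposition5: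
  fixes V :: "'a set" and E :: "'a set set" and c :: "'a set \<Rightarrow> real" and p :: "'a \<Rightarrow> real"
  assumes "pcstp V E c p"
    and "vi \<in> V" and "vj \<in> V"
    and "p vi > d_minus V E c p vi vj"
    and "optimal_solution V E c p VS ES"
    and "vj \<in> VS"
  shows "vi \<in> VS"
proof (rule ccontr)
  assume "vi \<notin> VS"
  obtain ws where "pc_walk V E p vi vj ws" and short: "l_minus V c p vj ws < p vi"
    using assms(1-4) by (rule pc_walk_below_d_minus)
  then have walk: "is_walk E ws" "set ws \<subseteq> V" "hd ws = vi" "last ws = vj"
    unfolding pc_walk_def by auto
  then have "ws \<noteq> []" "last ws \<in> VS" "last ws \<in> Tp V p \<union> {vj}"
    using assms(6) by (auto dest: is_walk_nonempty)
  then obtain k where k: "0 < k" "k \<le> length ws" "ws ! (k - 1) \<in> Tp V p \<union> {vj}"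
      "set (take k ws) \<inter> VS \<noteq> {}" "set (take k ws) \<inter> VS \<inter> (Tp V p \<union> {vj}) \<subseteq> {ws ! (k - 1)}"
    by (rule first_marked_after_hitting)
  define P where "P = take k ws"
  have P: "is_walk E P" "set P \<subseteq> V" "hd P \<notin> VS" "set P \<inter> VS \<noteq> {}" "last P = ws ! (k - 1)"
    using k walk set_take_subset[of k ws] \<open>vi \<notin> VS\<close> unfolding P_def
    by (auto simp: is_walk_take last_conv_nth is_walk_nonempty)
  have "p v = 0" if "v \<in> set P \<inter> VS - {last P}" for v
  proof -
    have "v \<notin> Tp V p" "v \<in> V"
      using that k(5) P(2,5) unfolding P_def by auto
    then show ?thesis
      using assms(1) by (auto simp: Tp_def pcstp_def)
  qed
  then have "p (hd P) \<le> c_pc c p P"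
    using optimal_solution_prize_le_c_pc[OF assms(1,5) P(1-4)] by blast
  moreover have "hd P = vi"
    using k(1) walk(3) unfolding P_def by (simp add: hd_take)
  ultimately have "p vi \<le> c_pc c p P"
    by simp
  moreover have "c_pc c p P \<le> l_minus V c p vj ws"
    unfolding P_def using k(1-3) by (rule c_pc_take_le_l_minus)
  ultimately show False
    using short by linarith
qed

end
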